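(* Let $\lambda<1$ (with $\lambda>0$), let $\delta_0$ be the solution of $\frac{\lambda}{100}=\delta_0^{\lambda^2/256}$, and suppose $\delta\le\delta_0$, $\epsilon\in(0,1)$, and $n>1/\delta$. Let $A$ be a set of $n$ arms with best arm $a^\star$, let $\alpha=\sqrt{1-\frac{\lambda}{8}}$, and sample every arm of $A$ exactly $\left(1+\frac{\lambda}{2}\right)\frac{1}{2\epsilon^2}\log\frac{1}{\delta}$ times, estimating each arm's mean by its empirical mean. If there are at most $n^{2/3}$ arms in $A$ that are $\alpha\epsilon$-close to $a^\star$, then with probability at least $1-\frac{\delta}{2}$, $a^\star$ is one of the $\frac{\lambda n}{50}$ arms of $A$ with highest empirical means.
   Context: Each arm $a$ has an unknown distribution supported on $[0,1]$ with mean $\mu(a)$; samples are independent draws. $a^\star\in\arg\max_{a\in A}\mu(a)$. An arm $a$ is $\eta$-close to $a^\star$ if $\mu(a^\star)-\mu(a)\le\eta$. $\log$ is natural; integer rounding is ignored. *)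

theory Defs
  imports "HOL-Probability.Probability"
begin

definition arm_mean :: "('a \<Rightarrow> real measure) \<Rightarrow> 'a \<Rightarrow> real" where
  "arm_mean D a = (\<integral>x. x \<partial>(D a))"

text \<open>Sampling every arm of A exactly m times: an outcome assigns to each pair (a, j),
  j < m, the j-th independent sample of arm a.\<close>
definition sample_space :: "('a \<Rightarrow> real measure) \<Rightarrow> 'a set \<Rightarrow> nat \<Rightarrow> ('a \<times> nat \<Rightarrow> real) measure" where
  "sample_space D A m = (\<Pi>\<^sub>M p \<in> A \<times> {..<m}. D (fst p))"

definition emp_mean :: "nat \<Rightarrow> ('a \<times> nat \<Rightarrow> real) \<Rightarrow> 'a \<Rightarrow> real" where
  "emp_mean m w a = (\<Sum>j<m. w (a, j)) / real m"

end

theory Submission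
  imports Defs
begin

text \<open>
  Put \<open>\<theta> = \<mu>(a*) - (\<alpha> - \<lambda>/16) \<epsilon>\<close>. By Hoeffding's inequality, with the prescribed
  number of samples the empirical mean of \<open>a*\<close> drops to \<open>\<theta>\<close> only with probability at
  most \<open>\<delta>/4\<close>, while an arm that is not \<open>\<alpha>\<epsilon>\<close>-close to \<open>a*\<close> has mean at most
  \<open>\<theta> - \<lambda>\<epsilon>/16\<close> and so reaches \<open>\<theta>\<close> with probability at most \<open>\<lambda>/100\<close>. These
  events are independent across arms, so Hoeffding's inequality applied to their indicators
  shows that more than \<open>\<lambda>n/100 + \<lambda>n/200\<close> far arms reach \<open>\<theta>\<close> only with probability at
  most \<open>\<delta>/4\<close>. Outside these two events an arm whose empirical mean is at least that of
  \<open>a*\<close> is either close (at most \<open>n powr (2/3) \<le> \<lambda>n/200\<close> of them) or a far arm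
  reaching \<open>\<theta>\<close>, which leaves at most \<open>\<lambda>n/50\<close> of them. The choice of \<open>\<delta>0\<close> amounts
  to \<open>\<lambda>\<^sup>2 ln (1/\<delta>) \<ge> 256 ln (100/\<lambda>)\<close>, which is all the numerical estimates need.
\<close>

section \<open>Hoeffding bounds for sums and counts\<close>

lemma (in prob_space) Hoeffding_unit_interval_ge:
  assumes indep: "indep_vars (\<lambda>_. borel) X J" and fin: "finite J"
    and unit: "\<And>i. i \<in> J \<Longrightarrow> AE x in M. X i x \<in> {0..1}"
    and mean: "\<And>i. i \<in> J \<Longrightarrow> expectation (X i) \<le> e" and r: "0 \<le> r"
  shows "prob {x \<in> space M. real (card J) * e + r \<le> (\<Sum>i\<in>J. X i x)} \<le> exp (-2 * r\<^sup>2 / real (card J))"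
proof (cases "J = {}")
  case False
  interpret Hoeffding_ineq M J X "\<lambda>_. 0" "\<lambda>_. 1" "\<Sum>i\<in>J. expectation (X i)"
    by unfold_locales (use fin indep unit in auto)
  have "prob {x \<in> space M. real (card J) * e + r \<le> (\<Sum>i\<in>J. X i x)}
      \<le> prob {x \<in> space M. (\<Sum>i\<in>J. expectation (X i)) + r \<le> (\<Sum>i\<in>J. X i x)}"
    using sum_mono[of J "\<lambda>i. expectation (X i)" "\<lambda>_. e"] mean by (intro finite_measure_mono) auto
  also have "\<dots> \<le> exp (-2 * r\<^sup>2 / (\<Sum>i\<in>J. (1 - 0)\<^sup>2))"
    using False fin r by (intro Hoeffding_ineq_ge) auto
  finally show ?thesis by simp
qed simp

lemma (in prob_space) Hoeffding_unit_interval_le: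
  assumes indep: "indep_vars (\<lambda>_. borel) X J" and fin: "finite J"
    and unit: "\<And>i. i \<in> J \<Longrightarrow> AE x in M. X i x \<in> {0..1}"
    and mean: "\<And>i. i \<in> J \<Longrightarrow> e \<le> expectation (X i)" and r: "0 \<le> r"
  shows "prob {x \<in> space M. (\<Sum>i\<in>J. X i x) \<le> real (card J) * e - r} \<le> exp (-2 * r\<^sup>2 / real (card J))"
proof (cases "J = {}")
  case False
  interpret Hoeffding_ineq M J X "\<lambda>_. 0" "\<lambda>_. 1" "\<Sum>i\<in>J. expectation (X i)"
    by unfold_locales (use fin indep unit in auto)
  have "prob {x \<in> space M. (\<Sum>i\<in>J. X i x) \<le> real (card J) * e - r}
      \<le> prob {x \<in> space M. (\<Sum>i\<in>J. X i x) \<le> (\<Sum>i\<in>J. expectation (X i)) - r}"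
    using sum_mono[of J "\<lambda>_. e" "\<lambda>i. expectation (X i)"] mean by (intro finite_measure_mono) auto
  also have "\<dots> \<le> exp (-2 * r\<^sup>2 / (\<Sum>i\<in>J. (1 - 0)\<^sup>2))"
    using False fin r by (intro Hoeffding_ineq_le) auto
  finally show ?thesis by simp
qed simp

lemma (in prob_space) Hoeffding_count_ge:
  fixes Y :: "'i \<Rightarrow> 'a \<Rightarrow> real"
  assumes indep: "indep_vars (\<lambda>_. borel) Y J" and fin: "finite J"
    and exceed: "\<And>i. i \<in> J \<Longrightarrow> prob {x \<in> space M. c \<le> Y i x} \<le> q" and r: "0 \<le> r"
  shows "prob {x \<in> space M. real (card J) * q + r \<le> real (card {i \<in> J. c \<le> Y i x})}
           \<le> exp (-2 * r\<^sup>2 / real (card J))"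
proof -
  have rv: "random_variable borel (Y i)" if "i \<in> J" for i
    using indep that by (simp add: indep_vars_def)
  have "indep_vars (\<lambda>_. borel) (\<lambda>i x. of_bool (c \<le> Y i x) :: real) J"
    using indep by (rule indep_vars_compose2[where Y="\<lambda>_ y. of_bool (c \<le> y)"])
      (rule measurable_compose[OF _ measurable_of_bool], simp)
  moreover have "expectation (\<lambda>x. of_bool (c \<le> Y i x)) \<le> q" if i: "i \<in> J" for i
  proof -
    have "expectation (\<lambda>x. of_bool (c \<le> Y i x)) = expectation (indicator {x \<in> space M. c \<le> Y i x})"
      by (intro Bochner_Integration.integral_cong) (auto simp: indicator_def)
    also have "\<dots> = prob {x \<in> space M. c \<le> Y i x}"
      using rv[OF i] by (simp add: measurable_sets)
    finally show ?thesis using exceed[OF i] by simp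
  qed
  ultimately have "prob {x \<in> space M. real (card J) * q + r \<le> (\<Sum>i\<in>J. of_bool (c \<le> Y i x))}
      \<le> exp (-2 * r\<^sup>2 / real (card J))"
    by (intro Hoeffding_unit_interval_ge fin r) auto
  moreover have "{i \<in> J. c \<le> Y i x} = J \<inter> {i. c \<le> Y i x}" for x by auto
  ultimately show ?thesis using fin by simp
qed

lemma (in prob_space) indep_vars_blocks:
  assumes indep: "indep_vars M' X I" and blocks: "\<And>j. j \<in> L \<Longrightarrow> K j \<subseteq> I"
    and disj: "disjoint_family_on K L"
    and g: "\<And>j. j \<in> L \<Longrightarrow> g j \<in> measurable (\<Pi>\<^sub>M i\<in>K j. M' i) (N j)"
    and f: "\<And>j x. j \<in> L \<Longrightarrow> f j x = g j (\<lambda>i\<in>K j. X i x)"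
  shows "indep_vars N f L"
proof -
  have "indep_vars N (\<lambda>j x. g j (\<lambda>i\<in>K j. X i x)) L"
    using indep_vars_restrict[OF indep blocks disj] g by (rule indep_vars_compose2)
  then show ?thesis
    using f by (subst indep_vars_cong[OF refl _ refl]) auto
qed

lemma indep_vars_PiM_components:
  assumes "\<And>i. i \<in> I \<Longrightarrow> prob_space (M i)"
  shows "prob_space.indep_vars (\<Pi>\<^sub>M i\<in>I. M i) M (\<lambda>i x. x i) I"
proof -
  interpret prob_space "\<Pi>\<^sub>M i\<in>I. M i"
    using assms by (rule prob_space_PiM)
  show ?thesis
  proof (cases "I = {}")
    case True
    then show ?thesis unfolding indep_vars_def indep_sets_def by simp
  next
    case False
    have "distr (\<Pi>\<^sub>M i\<in>I. M i) (\<Pi>\<^sub>M i\<in>I. M i) (\<lambda>x. \<lambda>i\<in>I. x i)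
        = distr (\<Pi>\<^sub>M i\<in>I. M i) (\<Pi>\<^sub>M i\<in>I. M i) (\<lambda>x. x)"
      by (rule distr_cong) (auto simp: space_PiM)
    also have "\<dots> = (\<Pi>\<^sub>M i\<in>I. distr (\<Pi>\<^sub>M i\<in>I. M i) (M i) (\<lambda>x. x i))"
      using assms by (auto simp: distr_PiM_component intro: PiM_cong)
    finally show ?thesis
      using False by (subst indep_vars_iff_distr_eq_PiM') auto
  qed
qed

lemma borel_measurable_card_Collect:
  assumes fin: "finite F" and sets: "\<And>a. a \<in> F \<Longrightarrow> {w \<in> space M. P a w} \<in> sets M"
  shows "(\<lambda>w. real (card {a \<in> F. P a w})) \<in> borel_measurable M"
proof -
  have "(\<lambda>w. \<Sum>a\<in>F. indicator {w \<in> space M. P a w} w :: real) \<in> borel_measurable M"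
    using sets by (intro borel_measurable_sum borel_measurable_indicator)
  moreover have "(\<Sum>a\<in>F. indicator {w \<in> space M. P a w} w) = real (card {a \<in> F. P a w})"
    if "w \<in> space M" for w
  proof -
    have "(\<Sum>a\<in>F. indicator {w \<in> space M. P a w} w) = (\<Sum>a\<in>F. of_bool (P a w) :: real)"
      using that by (intro sum.cong) (auto simp: indicator_def)
    also have "\<dots> = real (card (F \<inter> {a. P a w}))"
      using fin by simp
    also have "F \<inter> {a. P a w} = {a \<in> F. P a w}"
      by blast
    finally show ?thesis .
  qed
  ultimately show ?thesis
    by (rule measurable_cong[THEN iffD1, rotated])
qed

lemma card_rank_le:
  fixes f :: "'a \<Rightarrow> 'b::preorder"
  assumes "finite A" "C \<subseteq> A" "\<theta> < f b"
  shows "card {a \<in> A. f b \<le> f a} \<le> card C + card {a \<in> A - C. \<theta> \<le> f a}"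
proof -
  have "{a \<in> A. f b \<le> f a} \<subseteq> C \<union> {a \<in> A - C. \<theta> \<le> f a}"
    using assms(3) by (auto intro: less_imp_le less_le_trans)
  then have "card {a \<in> A. f b \<le> f a} \<le> card (C \<union> {a \<in> A - C. \<theta> \<le> f a})"
    using assms(1,2) by (intro card_mono) (auto intro: finite_subset)
  also have "\<dots> \<le> card C + card {a \<in> A - C. \<theta> \<le> f a}"
    by (rule card_Un_le)
  finally show ?thesis .
qed

section \<open>The parameter regime\<close>

lemma ln_inv_delta_ge_of_le_delta0:
  fixes lam \<delta>0 \<delta> :: real
  assumes "0 < lam" "0 < \<delta>0" "lam / 100 = \<delta>0 powr (lam\<^sup>2 / 256)" "0 < \<delta>" "\<delta> \<le> \<delta>0"
  shows "256 * ln (100 / lam) \<le> lam\<^sup>2 * ln (1 / \<delta>)"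
proof -
  have "ln (100 / lam) = - ln (lam / 100)"
    using assms(1) by (simp add: ln_div)
  also have "\<dots> = - (lam\<^sup>2 / 256 * ln \<delta>0)"
    unfolding assms(3) using assms(2) by (simp add: ln_powr)
  also have "\<dots> = lam\<^sup>2 / 256 * ln (1 / \<delta>0)"
    using assms(2) by (simp add: ln_div)
  also have "\<dots> \<le> lam\<^sup>2 / 256 * ln (1 / \<delta>)"
    using assms(2,4,5) by (intro mult_left_mono) (auto simp: ln_div)
  finally show ?thesis by simp
qed

lemma ln_4_le: "ln 4 \<le> (2::real)"
proof -
  have "ln 4 = 2 * ln (2::real)"
    using ln_realpow[of 2 2] by simp
  then show ?thesis using ln_2_less_1 by simp
qed

locale sampling_parameters =
  fixes lam \<delta> :: real
  assumes lam_pos: "0 < lam" and lam_less_1: "lam < 1" and delta_pos: "0 < \<delta>"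
    and delta_small: "256 * ln (100 / lam) \<le> lam\<^sup>2 * ln (1 / \<delta>)"
begin

lemma ln_100_div_lam_ge: "4 \<le> ln (100 / lam)"
proof -
  have "exp 4 = exp (1::real) ^ 4"
    using exp_of_nat_mult[of 4 1] by simp
  also have "\<dots> \<le> 3 ^ 4"
    using exp_le by (intro power_mono) auto
  also have "\<dots> \<le> 100 / lam"
    using lam_pos lam_less_1 by (simp add: field_simps)
  finally show ?thesis
    using lam_pos by (simp add: ln_ge_iff)
qed

lemma lam_div_16_less_sqrt: "lam / 16 < sqrt (1 - lam / 8)"
proof -
  have "(1 / 16)\<^sup>2 < 1 - lam / 8"
    using lam_less_1 by (simp add: power2_eq_square)
  then have "1 / 16 < sqrt (1 - lam / 8)"
    by (rule real_less_rsqrt)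
  then show ?thesis
    using lam_less_1 by simp
qed

lemma ln_inv_delta_pos: "0 < ln (1 / \<delta>)"
proof -
  have "0 < lam\<^sup>2 * ln (1 / \<delta>)"
    using delta_small ln_100_div_lam_ge by linarith
  then show ?thesis
    using lam_pos by (simp add: zero_less_mult_iff)
qed

lemma lam_ln_inv_delta_ge: "256 * ln (100 / lam) \<le> lam * ln (1 / \<delta>)"
proof -
  have "lam\<^sup>2 \<le> lam"
    using lam_pos lam_less_1 by (simp add: power2_eq_square mult_left_le)
  then have "lam\<^sup>2 * ln (1 / \<delta>) \<le> lam * ln (1 / \<delta>)"
    using ln_inv_delta_pos by (intro mult_right_mono) auto
  then show ?thesis using delta_small by linarith
qed

lemma ln_inv_delta_ge: "256 * ln (100 / lam) \<le> ln (1 / \<delta>)"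
proof -
  have "lam * ln (1 / \<delta>) \<le> ln (1 / \<delta>)"
    using lam_pos lam_less_1 ln_inv_delta_pos by (intro mult_left_le_one_le) auto
  then show ?thesis
    using lam_ln_inv_delta_ge by linarith
qed

lemma exp_neg_le_delta_div_4: "ln (1 / \<delta>) + ln 4 \<le> x \<Longrightarrow> exp (- x) \<le> \<delta> / 4"
proof -
  assume "ln (1 / \<delta>) + ln 4 \<le> x"
  then have "exp (- x) \<le> exp (- (ln (1 / \<delta>) + ln 4))"
    by simp
  also have "- (ln (1 / \<delta>) + ln 4) = ln (\<delta> / 4)"
    using delta_pos by (simp add: ln_div)
  also have "exp (ln (\<delta> / 4)) = \<delta> / 4"
    using delta_pos by simp
  finally show ?thesis .
qed

lemma one_add_lam_div_8_le: "1 + lam / 8 \<le> (1 + lam / 2) * (sqrt (1 - lam / 8) - lam / 16)\<^sup>2"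
proof -
  define \<alpha> where "\<alpha> = sqrt (1 - lam / 8)"
  have \<alpha>: "\<alpha>\<^sup>2 = 1 - lam / 8" "0 \<le> \<alpha>" "\<alpha> \<le> 1"
    using lam_pos lam_less_1 by (auto simp: \<alpha>_def)
  have "(\<alpha> - lam / 16)\<^sup>2 = \<alpha>\<^sup>2 - lam * \<alpha> / 8 + lam\<^sup>2 / 256"
    by (simp add: power2_eq_square algebra_simps)
  moreover have "lam * \<alpha> \<le> lam"
    using \<alpha> lam_pos by (simp add: mult_left_le)
  ultimately have "1 - lam / 4 \<le> (\<alpha> - lam / 16)\<^sup>2"
    using \<alpha> zero_le_power2[of lam] by linarith
  then have "(1 + lam / 2) * (1 - lam / 4) \<le> (1 + lam / 2) * (\<alpha> - lam / 16)\<^sup>2"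
    using lam_pos by (intro mult_left_mono) auto
  moreover have "lam\<^sup>2 \<le> lam"
    using lam_pos lam_less_1 by (simp add: power2_eq_square mult_left_le)
  ultimately show ?thesis
    unfolding \<alpha>_def by (simp add: power2_eq_square algebra_simps)
qed

lemma best_arm_exponent:
  assumes eps: "0 < \<epsilon>" and m: "(1 + lam / 2) * (1 / (2 * \<epsilon>\<^sup>2)) * ln (1 / \<delta>) \<le> m"
  shows "exp (-2 * m * ((sqrt (1 - lam / 8) - lam / 16) * \<epsilon>)\<^sup>2) \<le> \<delta> / 4"
proof -
  define t where "t = sqrt (1 - lam / 8) - lam / 16"
  have "ln (1 / \<delta>) + ln 4 \<le> (1 + lam / 8) * ln (1 / \<delta>)"
    using lam_ln_inv_delta_ge ln_100_div_lam_ge ln_4_le by (simp add: algebra_simps)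
  also have "\<dots> \<le> (1 + lam / 2) * t\<^sup>2 * ln (1 / \<delta>)"
    using one_add_lam_div_8_le ln_inv_delta_pos by (intro mult_right_mono) (auto simp: t_def)
  also have "\<dots> = t\<^sup>2 * (2 * \<epsilon>\<^sup>2) * ((1 + lam / 2) * (1 / (2 * \<epsilon>\<^sup>2)) * ln (1 / \<delta>))"
    using eps by (simp add: field_simps)
  also have "\<dots> \<le> t\<^sup>2 * (2 * \<epsilon>\<^sup>2) * m"
    using m by (intro mult_left_mono) auto
  also have "\<dots> = 2 * m * (t * \<epsilon>)\<^sup>2"
    by (simp add: power_mult_distrib)
  finally have "exp (- (2 * m * (t * \<epsilon>)\<^sup>2)) \<le> \<delta> / 4"
    by (rule exp_neg_le_delta_div_4)
  then show ?thesis
    by (simp add: t_def)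
qed

lemma far_arm_exponent:
  assumes eps: "0 < \<epsilon>" and m: "(1 + lam / 2) * (1 / (2 * \<epsilon>\<^sup>2)) * ln (1 / \<delta>) \<le> m"
  shows "exp (-2 * m * (lam * \<epsilon> / 16)\<^sup>2) \<le> lam / 100"
proof -
  have "ln (100 / lam) \<le> lam\<^sup>2 / 256 * ln (1 / \<delta>)"
    using delta_small by simp
  also have "\<dots> \<le> lam\<^sup>2 / 256 * ((1 + lam / 2) * ln (1 / \<delta>))"
    using lam_pos ln_inv_delta_pos by (intro mult_left_mono) auto
  also have "\<dots> = lam\<^sup>2 / 256 * (2 * \<epsilon>\<^sup>2) * ((1 + lam / 2) * (1 / (2 * \<epsilon>\<^sup>2)) * ln (1 / \<delta>))"
    using eps by (simp add: field_simps)
  also have "\<dots> \<le> lam\<^sup>2 / 256 * (2 * \<epsilon>\<^sup>2) * m"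
    using m by (intro mult_left_mono) auto
  also have "\<dots> = 2 * m * (lam * \<epsilon> / 16)\<^sup>2"
    by (simp add: power_mult_distrib power_divide)
  finally have "exp (-2 * m * (lam * \<epsilon> / 16)\<^sup>2) \<le> exp (- ln (100 / lam))"
    by simp
  also have "\<dots> = lam / 100"
    using lam_pos by (simp add: exp_minus)
  finally show ?thesis .
qed

lemma powr_two_thirds_le:
  assumes "1 / \<delta> < x"
  shows "x powr (2 / 3) \<le> lam * x / 200"
proof -
  have x: "0 < x"
    using assms delta_pos less_trans[of 0 "1 / \<delta>" x] by simp
  have "ln (200 / lam) = ln 2 + ln (100 / lam)"
    using lam_pos ln_mult[of 2 "100 / lam"] by simp
  also have "\<dots> \<le> ln (1 / \<delta>) / 3"
    using ln_inv_delta_ge ln_100_div_lam_ge ln_2_less_1 by linarith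
  also have "\<dots> < ln x / 3"
    using assms delta_pos x by simp
  also have "\<dots> = ln (x powr (1 / 3))"
    using x by (simp add: ln_powr)
  finally have "200 / lam < x powr (1 / 3)"
    using lam_pos x by (subst (asm) ln_less_cancel_iff) auto
  then have "200 * x powr (2 / 3) \<le> lam * x powr (1 / 3) * x powr (2 / 3)"
    using lam_pos by (intro mult_right_mono) (auto simp: field_simps)
  also have "\<dots> = lam * x"
    using x by (simp flip: powr_add mult.assoc)
  finally show ?thesis
    by simp
qed

lemma rank_budget:
  assumes "1 / \<delta> < x" "c \<le> x powr (2 / 3)" "f \<le> x"
  shows "c + f * (lam / 100) + lam * x / 200 \<le> lam * x / 50"
proof -
  have "f * (lam / 100) \<le> x * (lam / 100)"
    using assms(3) lam_pos by (intro mult_right_mono) auto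
  then show ?thesis
    using assms(2) powr_two_thirds_le[OF assms(1)] by (simp add: mult.commute)
qed

lemma far_count_exponent:
  assumes "1 / \<delta> < x"
  shows "exp (-2 * (lam * x / 200)\<^sup>2 / x) \<le> \<delta> / 4"
proof -
  define y where "y = ln (1 / \<delta>) - 2 * ln (100 / lam)"
  have y: "8 \<le> y" "ln (1 / \<delta>) \<le> 2 * y"
    using ln_inv_delta_ge ln_100_div_lam_ge by (auto simp: y_def)
  have "1 + y + y\<^sup>2 / 2 \<le> exp y"
    using exp_lower_Taylor_quadratic y by simp
  moreover have "8 * y \<le> y\<^sup>2"
    using y by (simp add: power2_eq_square)
  ultimately have exp_y: "4 + 4 * y \<le> exp y"
    using y by linarith
  have "exp y = exp (ln (1 / \<delta>)) / exp (ln (100 / lam)) ^ 2"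
    by (simp add: y_def exp_diff flip: exp_of_nat_mult)
  also have "\<dots> = 1 / \<delta> * (lam / 100)\<^sup>2"
    using lam_pos delta_pos by (simp add: power_divide)
  also have "\<dots> \<le> x * (lam / 100)\<^sup>2"
    using assms by (intro mult_right_mono) auto
  also have "\<dots> = 2 * (2 * (lam * x / 200)\<^sup>2 / x)"
    using assms delta_pos by (simp add: power2_eq_square)
  finally have "ln (1 / \<delta>) + ln 4 \<le> 2 * (lam * x / 200)\<^sup>2 / x"
    using exp_y y ln_4_le by linarith
  then have "exp (- (2 * (lam * x / 200)\<^sup>2 / x)) \<le> \<delta> / 4"
    by (rule exp_neg_le_delta_div_4)
  then show ?thesis
    by simp
qed

end

section \<open>Sampling every arm \<open>m\<close> times\<close>

locale arm_sampling =
  fixes D :: "'a \<Rightarrow> real measure" and A :: "'a set" and m :: nat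
  assumes prob_space_arm: "\<And>a. a \<in> A \<Longrightarrow> prob_space (D a)"
    and sets_arm: "\<And>a. a \<in> A \<Longrightarrow> sets (D a) = sets borel"
    and AE_arm_unit: "\<And>a. a \<in> A \<Longrightarrow> AE x in D a. 0 \<le> x \<and> x \<le> 1"
begin

sublocale prob_space "sample_space D A m"
  unfolding sample_space_def by (rule prob_space_PiM) (auto intro: prob_space_arm)

lemma sets_sample_space: "sets (sample_space D A m) = sets (\<Pi>\<^sub>M p\<in>A \<times> {..<m}. borel)"
  unfolding sample_space_def by (rule sets_PiM_cong) (auto simp: sets_arm)

lemma measurable_sample:
  "p \<in> A \<times> {..<m} \<Longrightarrow> (\<lambda>w. w p) \<in> borel_measurable (sample_space D A m)"
  by (simp add: measurable_cong_sets[OF sets_sample_space refl])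

lemma measurable_emp_mean:
  "a \<in> A \<Longrightarrow> (\<lambda>w. emp_mean m w a) \<in> borel_measurable (sample_space D A m)"
  unfolding emp_mean_def by (intro borel_measurable_divide borel_measurable_sum measurable_sample) auto

lemma AE_sample_unit:
  assumes "p \<in> A \<times> {..<m}"
  shows "AE w in sample_space D A m. w p \<in> {0..1}"
  unfolding sample_space_def
  by (rule AE_PiM_component) (use assms prob_space_arm AE_arm_unit in \<open>auto elim!: eventually_mono\<close>)

lemma expectation_sample:
  assumes p: "p \<in> A \<times> {..<m}"
  shows "expectation (\<lambda>w. w p) = arm_mean D (fst p)"
proof -
  have "(\<lambda>w. w p) \<in> measurable (sample_space D A m) (D (fst p))"
    unfolding sample_space_def using p by auto
  moreover have "(\<lambda>x. x) \<in> borel_measurable (D (fst p))"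
    using p by (auto simp: measurable_cong_sets[OF sets_arm refl])
  ultimately have "integral\<^sup>L (distr (sample_space D A m) (D (fst p)) (\<lambda>w. w p)) (\<lambda>x. x)
      = expectation (\<lambda>w. w p)"
    by (rule integral_distr)
  moreover have "distr (sample_space D A m) (D (fst p)) (\<lambda>w. w p) = D (fst p)"
    unfolding sample_space_def by (rule distr_PiM_component) (use p prob_space_arm in auto)
  ultimately show ?thesis
    by (simp add: arm_mean_def)
qed

lemma indep_vars_samples: "indep_vars (\<lambda>_. borel) (\<lambda>p w. w p) (A \<times> {..<m})"
proof -
  have "indep_vars (\<lambda>p. D (fst p)) (\<lambda>p w. w p) (A \<times> {..<m})"
    unfolding sample_space_def by (rule indep_vars_PiM_components) (auto intro: prob_space_arm)
  then have "indep_vars (\<lambda>_. borel) (\<lambda>p w. (\<lambda>x. x) (w p)) (A \<times> {..<m})"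
    by (rule indep_vars_compose2) (auto intro!: measurable_ident_sets simp: sets_arm)
  then show ?thesis by simp
qed

lemma indep_vars_arm_samples:
  "a \<in> A \<Longrightarrow> indep_vars (\<lambda>_. borel) (\<lambda>j w. w (a, j)) {..<m}"
  by (rule indep_vars_blocks[OF indep_vars_samples, where K="\<lambda>j. {(a, j)}" and g="\<lambda>j r. r (a, j)"])
    (auto simp: disjoint_family_on_def)

lemma indep_vars_emp_mean: "indep_vars (\<lambda>_. borel) (\<lambda>a w. emp_mean m w a) A"
  by (rule indep_vars_blocks[OF indep_vars_samples, where K="\<lambda>a. {a} \<times> {..<m}"
        and g="\<lambda>a r. (\<Sum>j<m. r (a, j)) / real m"])
    (auto simp: disjoint_family_on_def emp_mean_def)

lemma prob_emp_mean_ge: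
  assumes a: "a \<in> A" and s: "0 \<le> s" and c: "arm_mean D a + s \<le> c"
  shows "prob {w \<in> space (sample_space D A m). c \<le> emp_mean m w a} \<le> exp (-2 * real m * s\<^sup>2)"
proof (cases "m = 0")
  case False
  have "prob {w \<in> space (sample_space D A m). c \<le> emp_mean m w a}
      \<le> prob {w \<in> space (sample_space D A m).
           real (card {..<m}) * arm_mean D a + real m * s \<le> (\<Sum>j\<in>{..<m}. w (a, j))}"
  proof (rule finite_measure_mono)
    show "{w \<in> space (sample_space D A m).
           real (card {..<m}) * arm_mean D a + real m * s \<le> (\<Sum>j\<in>{..<m}. w (a, j))} \<in> events"
      using a by (intro borel_measurable_le borel_measurable_sum borel_measurable_const measurable_sample) auto
    have "real m * (arm_mean D a + s) \<le> (\<Sum>j\<in>{..<m}. w (a, j))" if "c \<le> emp_mean m w a" for w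
    proof -
      have "real m * (arm_mean D a + s) \<le> real m * c"
        using c by (intro mult_left_mono) auto
      also have "\<dots> \<le> (\<Sum>j\<in>{..<m}. w (a, j))"
        using that False by (simp add: emp_mean_def pos_le_divide_eq mult.commute)
      finally show ?thesis .
    qed
    then show "{w \<in> space (sample_space D A m). c \<le> emp_mean m w a}
      \<subseteq> {w \<in> space (sample_space D A m).
           real (card {..<m}) * arm_mean D a + real m * s \<le> (\<Sum>j\<in>{..<m}. w (a, j))}"
      by (auto simp: distrib_left)
  qed
  also have "\<dots> \<le> exp (-2 * (real m * s)\<^sup>2 / real (card {..<m :: nat}))"
    using a s by (intro Hoeffding_unit_interval_ge indep_vars_arm_samples AE_sample_unit)
      (auto simp: expectation_sample)
  also have "\<dots> = exp (-2 * real m * s\<^sup>2)"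
    using False by (simp add: power2_eq_square)
  finally show ?thesis .
next
  case True
  then show ?thesis
    using prob_le_1 by simp
qed

lemma prob_emp_mean_le:
  assumes a: "a \<in> A" and s: "0 \<le> s" and c: "c \<le> arm_mean D a - s"
  shows "prob {w \<in> space (sample_space D A m). emp_mean m w a \<le> c} \<le> exp (-2 * real m * s\<^sup>2)"
proof (cases "m = 0")
  case False
  have "prob {w \<in> space (sample_space D A m). emp_mean m w a \<le> c}
      \<le> prob {w \<in> space (sample_space D A m).
           (\<Sum>j\<in>{..<m}. w (a, j)) \<le> real (card {..<m}) * arm_mean D a - real m * s}"
  proof (rule finite_measure_mono)
    show "{w \<in> space (sample_space D A m).
           (\<Sum>j\<in>{..<m}. w (a, j)) \<le> real (card {..<m}) * arm_mean D a - real m * s} \<in> events"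
      using a by (intro borel_measurable_le borel_measurable_sum borel_measurable_const
          borel_measurable_diff borel_measurable_times measurable_sample) auto
    have "(\<Sum>j\<in>{..<m}. w (a, j)) \<le> real m * (arm_mean D a - s)" if "emp_mean m w a \<le> c" for w
    proof -
      have "(\<Sum>j\<in>{..<m}. w (a, j)) \<le> real m * c"
        using that False by (simp add: emp_mean_def pos_divide_le_eq mult.commute)
      also have "\<dots> \<le> real m * (arm_mean D a - s)"
        using c by (intro mult_left_mono) auto
      finally show ?thesis .
    qed
    then show "{w \<in> space (sample_space D A m). emp_mean m w a \<le> c}
      \<subseteq> {w \<in> space (sample_space D A m).
           (\<Sum>j\<in>{..<m}. w (a, j)) \<le> real (card {..<m}) * arm_mean D a - real m * s}"
      by (auto simp: right_diff_distrib)
  qed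
  also have "\<dots> \<le> exp (-2 * (real m * s)\<^sup>2 / real (card {..<m :: nat}))"
    using a s by (intro Hoeffding_unit_interval_le indep_vars_arm_samples AE_sample_unit)
      (auto simp: expectation_sample)
  also have "\<dots> = exp (-2 * real m * s\<^sup>2)"
    using False by (simp add: power2_eq_square)
  finally show ?thesis .
next
  case True
  then show ?thesis
    using prob_le_1 by simp
qed

lemma prob_rank_le:
  assumes fin: "finite A" and best: "astar \<in> A" and C: "C \<subseteq> A" and r: "0 < r"
    and far: "\<And>a. a \<in> A - C \<Longrightarrow> prob {w \<in> space (sample_space D A m). \<theta> \<le> emp_mean m w a} \<le> q"
    and k: "real (card C) + real (card (A - C)) * q + r \<le> k"
  shows "1 - prob {w \<in> space (sample_space D A m). emp_mean m w astar \<le> \<theta>} - exp (-2 * r\<^sup>2 / real (card A))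
    \<le> prob {w \<in> space (sample_space D A m).
              real (card {a \<in> A. emp_mean m w a \<ge> emp_mean m w astar}) \<le> k}"
    (is "1 - prob ?B1 - _ \<le> prob ?G")
proof -
  define B2 where "B2 = {w \<in> space (sample_space D A m).
    real (card (A - C)) * q + r \<le> real (card {a \<in> A - C. \<theta> \<le> emp_mean m w a})}"
  have events: "?B1 \<in> events" "B2 \<in> events" "?G \<in> events"
    unfolding B2_def using fin best
    by (intro borel_measurable_le borel_measurable_const borel_measurable_card_Collect
        measurable_emp_mean; auto)+
  have "space (sample_space D A m) - ?G \<subseteq> ?B1 \<union> B2"
  proof (rule subsetI, rule ccontr)
    fix w assume w: "w \<in> space (sample_space D A m) - ?G" and "w \<notin> ?B1 \<union> B2"
    then have "\<theta> < emp_mean m w astar"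
      and "real (card {a \<in> A - C. \<theta> \<le> emp_mean m w a}) < real (card (A - C)) * q + r"
      by (auto simp: B2_def)
    then have "real (card {a \<in> A. emp_mean m w a \<ge> emp_mean m w astar}) \<le> k"
      using card_rank_le[OF fin C, of \<theta> "\<lambda>a. emp_mean m w a" astar] k by linarith
    then show False
      using w by auto
  qed
  then have "prob (space (sample_space D A m) - ?G) \<le> prob (?B1 \<union> B2)"
    using events by (intro finite_measure_mono) auto
  also have "\<dots> \<le> prob ?B1 + prob B2"
    using events by (intro measure_subadditive) auto
  finally have "prob (space (sample_space D A m) - ?G) \<le> prob ?B1 + prob B2" .
  moreover have "prob B2 \<le> exp (-2 * r\<^sup>2 / real (card A))"
  proof (cases "A - C = {}")
    case True
    then have "B2 = {}"
      using r unfolding B2_def True by simp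
    then show ?thesis
      by simp
  next
    case False
    have "prob B2 \<le> exp (-2 * r\<^sup>2 / real (card (A - C)))"
      unfolding B2_def using fin r far
      by (intro Hoeffding_count_ge indep_vars_subset[OF indep_vars_emp_mean]) auto
    also have "\<dots> \<le> exp (-2 * r\<^sup>2 / real (card A))"
    proof -
      have "0 < card (A - C)" "card (A - C) \<le> card A"
        using fin False by (auto simp: card_gt_0_iff card_mono)
      then show ?thesis
        by (intro exp_mono divide_left_mono_neg) auto
    qed
    finally show ?thesis .
  qed
  ultimately show ?thesis
    using prob_compl[OF events(3)] by linarith
qed

end

locale sampling_regime = arm_sampling D A m + sampling_parameters lam \<delta>
  for D :: "'a \<Rightarrow> real measure" and A m lam \<delta> +
  fixes \<epsilon> :: real
  assumes eps_pos: "0 < \<epsilon>"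
    and samples_ge: "(1 + lam / 2) * (1 / (2 * \<epsilon>\<^sup>2)) * ln (1 / \<delta>) \<le> real m"
begin

definition threshold :: "'a \<Rightarrow> real" where
  "threshold b = arm_mean D b - (sqrt (1 - lam / 8) - lam / 16) * \<epsilon>"

lemma prob_emp_mean_le_threshold:
  assumes "b \<in> A"
  shows "prob {w \<in> space (sample_space D A m). emp_mean m w b \<le> threshold b} \<le> \<delta> / 4"
proof -
  have "0 \<le> (sqrt (1 - lam / 8) - lam / 16) * \<epsilon>"
    using lam_div_16_less_sqrt eps_pos by simp
  then have "prob {w \<in> space (sample_space D A m). emp_mean m w b \<le> threshold b}
      \<le> exp (-2 * real m * ((sqrt (1 - lam / 8) - lam / 16) * \<epsilon>)\<^sup>2)"
    by (rule prob_emp_mean_le[OF assms]) (simp add: threshold_def)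
  also have "\<dots> \<le> \<delta> / 4"
    using eps_pos samples_ge by (rule best_arm_exponent)
  finally show ?thesis .
qed

lemma prob_threshold_le_emp_mean:
  assumes a: "a \<in> A" and far: "sqrt (1 - lam / 8) * \<epsilon> < arm_mean D b - arm_mean D a"
  shows "prob {w \<in> space (sample_space D A m). threshold b \<le> emp_mean m w a} \<le> lam / 100"
proof -
  have "arm_mean D a + lam * \<epsilon> / 16 \<le> threshold b"
    using far by (simp add: threshold_def left_diff_distrib)
  then have "prob {w \<in> space (sample_space D A m). threshold b \<le> emp_mean m w a}
      \<le> exp (-2 * real m * (lam * \<epsilon> / 16)\<^sup>2)"
    using a lam_pos eps_pos by (intro prob_emp_mean_ge) auto
  also have "\<dots> \<le> lam / 100"
    using eps_pos samples_ge by (rule far_arm_exponent)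
  finally show ?thesis .
qed

end

theorem lemma3:
  fixes D :: "'a \<Rightarrow> real measure" and A :: "'a set" and astar :: 'a
    and lam \<delta>0 \<delta> \<epsilon> :: real and n m :: nat
  assumes lam: "0 < lam" "lam < 1"
    and delta0: "0 < \<delta>0" "lam / 100 = \<delta>0 powr (lam\<^sup>2 / 256)"
    and delta: "0 < \<delta>" "\<delta> \<le> \<delta>0"
    and eps: "0 < \<epsilon>" "\<epsilon> < 1"
    and finA: "finite A" and cardA: "card A = n" and n_big: "real n > 1 / \<delta>"
    and dist: "\<And>a. a \<in> A \<Longrightarrow> prob_space (D a)"
    and borel: "\<And>a. a \<in> A \<Longrightarrow> sets (D a) = sets borel"
    and support: "\<And>a. a \<in> A \<Longrightarrow> (AE x in D a. 0 \<le> x \<and> x \<le> 1)"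
    and best: "astar \<in> A" "\<And>a. a \<in> A \<Longrightarrow> arm_mean D a \<le> arm_mean D astar"
    and m_def: "m = nat \<lceil>(1 + lam / 2) * (1 / (2 * \<epsilon>\<^sup>2)) * ln (1 / \<delta>)\<rceil>"
    and few_close: "real (card {a \<in> A. arm_mean D astar - arm_mean D a \<le> sqrt (1 - lam / 8) * \<epsilon>})
                      \<le> real n powr (2 / 3)"
  shows "measure (sample_space D A m)
           {w \<in> space (sample_space D A m).
              real (card {a \<in> A. emp_mean m w a \<ge> emp_mean m w astar}) \<le> lam * real n / 50}
         \<ge> 1 - \<delta> / 2"
proof -
  have "arm_sampling D A"
    using dist borel support by (simp add: arm_sampling_def)
  moreover have "sampling_parameters lam \<delta>"
    using lam delta ln_inv_delta_ge_of_le_delta0[OF lam(1) delta0 delta]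
    by (simp add: sampling_parameters_def)
  ultimately interpret sampling_regime D A m lam \<delta> \<epsilon>
    using eps m_def real_nat_ceiling_ge
    by (simp add: sampling_regime_def sampling_regime_axioms_def)
  define C where "C = {a \<in> A. arm_mean D astar - arm_mean D a \<le> sqrt (1 - lam / 8) * \<epsilon>}"
  have "C \<subseteq> A" and "0 < lam * real n / 200"
    using lam(1) n_big delta(1) less_trans[of 0 "1 / \<delta>" "real n"] by (auto simp: C_def)
  moreover have "real (card C) + real (card (A - C)) * (lam / 100) + lam * real n / 200
      \<le> lam * real n / 50"
    using n_big few_close card_mono[OF finA Diff_subset] cardA
    by (intro rank_budget) (auto simp: C_def)
  moreover have "\<And>a. a \<in> A - C \<Longrightarrow>
      prob {w \<in> space (sample_space D A m). threshold astar \<le> emp_mean m w a} \<le> lam / 100"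
    by (intro prob_threshold_le_emp_mean) (auto simp: C_def)
  ultimately have "1 - prob {w \<in> space (sample_space D A m). emp_mean m w astar \<le> threshold astar}
      - exp (-2 * (lam * real n / 200)\<^sup>2 / real (card A))
    \<le> prob {w \<in> space (sample_space D A m).
              real (card {a \<in> A. emp_mean m w a \<ge> emp_mean m w astar}) \<le> lam * real n / 50}"
    using prob_rank_le[OF finA best(1)] by blast
  moreover have "exp (-2 * (lam * real n / 200)\<^sup>2 / real (card A)) \<le> \<delta> / 4"
    using far_count_exponent[OF n_big] cardA by simp
  ultimately show ?thesis
    using prob_emp_mean_le_threshold[OF best(1)] by linarith
qed

end
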